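(* Let $q \in \mathbb{N}$ and let $f\colon [0,1]\times[0,1]\to\mathbb{R}_+$ be a positive definite function on $[0,1]$. Let $0 = t_1 < t_2 < \dots < t_\ell = 1$ be anchor points and let $A_1,\dots,A_\ell \in \mathbb{R}^{q\times q}$ be symmetric positive definite matrices. For each $t\in[0,1]$ define $B_t\in\mathbb{R}^{q\times q}$ as the unique positive definite matrix satisfying $$B_t^\top B_t = \frac{t_{k+1}-t}{t_{k+1}-t_k}A_k + \frac{t-t_k}{t_{k+1}-t_k}A_{k+1} \quad \text{for } t\in[t_k,t_{k+1}].$$ For all $s,t\in[0,1]$ define $K(s,t) = f(s,t)\, B_s^\top B_t \in \mathbb{R}^{q\times q}$. Then the matrix-valued function $K\colon[0,1]\times[0,1]\to\mathbb{R}^{q\times q}$ is positive definite.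
   Context: A function $f\colon[0,1]\times[0,1]\to\mathbb{R}$ is positive definite if for every finite collection $s_1,\dots,s_m\in[0,1]$ the matrix $(f(s_i,s_j))_{i,j=1}^m$ is positive definite. A matrix-valued function $K\colon[0,1]\times[0,1]\to\mathbb{R}^{q\times q}$ is positive definite if for every finite collection $s_1,\dots,s_m\in[0,1]$ the block matrix $(K(s_i,s_j))_{i,j=1}^m\in\mathbb{R}^{qm\times qm}$ is positive definite. *)

theory Defs
  imports "HOL-Analysis.Analysis"
begin

definition pos_def_mat :: "real^'n^'n \<Rightarrow> bool" where
  "pos_def_mat M \<longleftrightarrow> transpose M = M \<and> (\<forall>x. x \<noteq> 0 \<longrightarrow> x \<bullet> (M *v x) > 0)"

definition pos_def_fun :: "(real \<Rightarrow> real \<Rightarrow> real) \<Rightarrow> bool" where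
  "pos_def_fun f \<longleftrightarrow>
     (\<forall>(m::nat) (s::nat \<Rightarrow> real).
        (\<forall>i<m. s i \<in> {0..1}) \<and> inj_on s {..<m} \<longrightarrow>
          (\<forall>i<m. \<forall>j<m. f (s i) (s j) = f (s j) (s i)) \<and>
          (\<forall>c::nat \<Rightarrow> real. (\<exists>i<m. c i \<noteq> 0) \<longrightarrow>
              (\<Sum>i<m. \<Sum>j<m. c i * f (s i) (s j) * c j) > 0))"

definition pos_def_mfun :: "(real \<Rightarrow> real \<Rightarrow> real^'q^'q) \<Rightarrow> bool" where
  "pos_def_mfun K \<longleftrightarrow>
     (\<forall>(m::nat) (s::nat \<Rightarrow> real).
        (\<forall>i<m. s i \<in> {0..1}) \<and> inj_on s {..<m} \<longrightarrow>
          (\<forall>i<m. \<forall>j<m. transpose (K (s i) (s j)) = K (s j) (s i)) \<and>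
          (\<forall>v::nat \<Rightarrow> real^'q. (\<exists>i<m. v i \<noteq> 0) \<longrightarrow>
              (\<Sum>i<m. \<Sum>j<m. v i \<bullet> (K (s i) (s j) *v v j)) > 0))"

end

theory Submission
  imports Defs
begin

text \<open>Put \<open>w\<^sub>i = B\<^sub>s\<^sub>i v\<^sub>i\<close>. Then \<open>\<Sum>\<^sub>i\<^sub>j v\<^sub>i \<bullet> K(s\<^sub>i,s\<^sub>j) v\<^sub>j = \<Sum>\<^sub>i\<^sub>j f(s\<^sub>i,s\<^sub>j) (w\<^sub>i \<bullet> w\<^sub>j)\<close>,
  which splits over the coordinates \<open>k\<close> into the scalar quadratic forms of \<open>f\<close> with
  coefficients \<open>(w\<^sub>i)\<^sub>k\<close>. Each of these is nonnegative, and since every \<open>B\<^sub>t\<close> is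
  invertible some \<open>w\<^sub>i\<close> is nonzero, so at least one of them is positive.\<close>

lemma inner_scaleR_transpose_matrix_mult:
  fixes B C :: "real^'n^'m"
  shows "x \<bullet> ((a *\<^sub>R (transpose B ** C)) *v y) = a * ((B *v x) \<bullet> (C *v y))"
proof -
  have "(a *\<^sub>R (transpose B ** C)) *v y = a *\<^sub>R (transpose B *v (C *v y))"
    by (simp add: scaleR_matrix_vector_assoc matrix_vector_mul_assoc)
  then have "x \<bullet> ((a *\<^sub>R (transpose B ** C)) *v y) = a * (x \<bullet> ((C *v y) v* B))"
    by (simp add: transpose_matrix_vector)
  also have "x \<bullet> ((C *v y) v* B) = (B *v x) \<bullet> (C *v y)"
    by (metis dot_lmul_matrix inner_commute)
  finally show ?thesis .
qed

lemma pos_def_mat_mult_nonzero: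
  assumes "pos_def_mat B" "x \<noteq> 0"
  shows "B *v x \<noteq> 0"
  using assms unfolding pos_def_mat_def by force

lemma pos_def_fun_quadratic_nonneg:
  fixes m :: nat and s :: "nat \<Rightarrow> real" and c :: "nat \<Rightarrow> real"
  assumes "pos_def_fun f" "\<forall>i<m. s i \<in> {0..1}" "inj_on s {..<m}"
  shows "(\<Sum>i<m. \<Sum>j<m. c i * f (s i) (s j) * c j) \<ge> 0"
proof (cases "\<exists>i<m. c i \<noteq> 0")
  case True
  then have "(\<Sum>i<m. \<Sum>j<m. c i * f (s i) (s j) * c j) > 0"
    using assms(1)[unfolded pos_def_fun_def, rule_format, of m s] assms(2,3) by blast
  then show ?thesis by simp
qed simp

lemma sum_sum_scaled_inner_eq_sum_components:
  fixes w :: "nat \<Rightarrow> real^'n"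
  shows "(\<Sum>i\<in>I. \<Sum>j\<in>J. g i j * (w i \<bullet> w j))
       = (\<Sum>k\<in>UNIV. \<Sum>i\<in>I. \<Sum>j\<in>J. w i $ k * g i j * w j $ k)"
proof -
  have "(\<Sum>i\<in>I. \<Sum>j\<in>J. g i j * (w i \<bullet> w j))
      = (\<Sum>i\<in>I. \<Sum>j\<in>J. \<Sum>k\<in>UNIV. w i $ k * g i j * w j $ k)"
    by (simp add: inner_vec_def sum_distrib_left mult_ac)
  also have "\<dots> = (\<Sum>i\<in>I. \<Sum>k\<in>UNIV. \<Sum>j\<in>J. w i $ k * g i j * w j $ k)"
    by (rule sum.cong[OF refl], rule sum.swap)
  also have "\<dots> = (\<Sum>k\<in>UNIV. \<Sum>i\<in>I. \<Sum>j\<in>J. w i $ k * g i j * w j $ k)"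
    by (rule sum.swap)
  finally show ?thesis .
qed

lemma pos_def_mfun_scaled_gram:
  fixes B :: "real \<Rightarrow> real^'q^'q"
  assumes f_pd: "pos_def_fun f"
    and B_inj: "\<forall>t\<in>{0..1}. \<forall>x. x \<noteq> 0 \<longrightarrow> B t *v x \<noteq> 0"
  shows "pos_def_mfun (\<lambda>s t. f s t *\<^sub>R (transpose (B s) ** B t))"
  unfolding pos_def_mfun_def
proof (intro allI impI, rule conjI)
  fix m and s :: "nat \<Rightarrow> real"
  assume pts: "(\<forall>i<m. s i \<in> {0..1}) \<and> inj_on s {..<m}"
  note f_at = f_pd[unfolded pos_def_fun_def, rule_format, OF pts]
  show "\<forall>i<m. \<forall>j<m. transpose (f (s i) (s j) *\<^sub>R (transpose (B (s i)) ** B (s j)))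
                  = f (s j) (s i) *\<^sub>R (transpose (B (s j)) ** B (s i))"
    using f_at by (simp add: transpose_scalar matrix_transpose_mul transpose_transpose)
  show "\<forall>v. (\<exists>i<m. v i \<noteq> 0) \<longrightarrow>
          (\<Sum>i<m. \<Sum>j<m. v i \<bullet> (f (s i) (s j) *\<^sub>R (transpose (B (s i)) ** B (s j)) *v v j)) > 0"
  proof (intro allI impI)
    fix v :: "nat \<Rightarrow> real^'q"
  assume "\<exists>i<m. v i \<noteq> 0"
  then obtain i0 where i0: "i0 < m" "v i0 \<noteq> 0" by blast
  define w where "w i = B (s i) *v v i" for i
  define g where "g k = (\<Sum>i<m. \<Sum>j<m. w i $ k * f (s i) (s j) * w j $ k)" for k
  have "w i0 \<noteq> 0"
    unfolding w_def using B_inj pts i0 by blast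
  then obtain k0 where k0: "w i0 $ k0 \<noteq> 0"
    by (auto simp: vec_eq_iff)
  have g_nonneg: "g k \<ge> 0" for k
    unfolding g_def
    using pos_def_fun_quadratic_nonneg[OF f_pd, where c = "\<lambda>i. w i $ k"] pts by simp
  have "g k0 > 0"
    unfolding g_def using conjunct2[OF f_at, rule_format, of "\<lambda>i. w i $ k0"] i0(1) k0 by blast
  then have "(\<Sum>k\<in>UNIV. g k) > 0"
    using g_nonneg by (intro sum_pos2[of UNIV k0]) auto
  also have "(\<Sum>k\<in>UNIV. g k) = (\<Sum>i<m. \<Sum>j<m. f (s i) (s j) * (w i \<bullet> w j))"
    unfolding g_def by (rule sum_sum_scaled_inner_eq_sum_components[symmetric])
  also have "\<dots> = (\<Sum>i<m. \<Sum>j<m. v i \<bullet> (f (s i) (s j) *\<^sub>R (transpose (B (s i)) ** B (s j)) *v v j))"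
    by (simp add: inner_scaleR_transpose_matrix_mult w_def)
  finally show "(\<Sum>i<m. \<Sum>j<m. v i \<bullet> (f (s i) (s j) *\<^sub>R (transpose (B (s i)) ** B (s j)) *v v j)) > 0" .
  qed
qed

theorem proposition1:
  fixes f :: "real \<Rightarrow> real \<Rightarrow> real"
    and l :: nat
    and tt :: "nat \<Rightarrow> real"
    and A :: "nat \<Rightarrow> real^'q^'q"
    and B :: "real \<Rightarrow> real^'q^'q"
  assumes f_nonneg: "\<forall>s\<in>{0..1}. \<forall>t\<in>{0..1}. f s t \<ge> 0"
    and f_pd: "pos_def_fun f"
    and l_ge: "l \<ge> 2"
    and t_first: "tt 1 = 0"
    and t_last: "tt l = 1"
    and t_incr: "\<forall>k\<in>{1..<l}. tt k < tt (Suc k)"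
    and A_pd: "\<forall>k\<in>{1..l}. pos_def_mat (A k)"
    and B_pd: "\<forall>t\<in>{0..1}. pos_def_mat (B t)"
    and B_eq: "\<forall>t\<in>{0..1}. \<forall>k\<in>{1..<l}. tt k \<le> t \<and> t \<le> tt (Suc k) \<longrightarrow>
                 transpose (B t) ** B t =
                   ((tt (Suc k) - t) / (tt (Suc k) - tt k)) *\<^sub>R A k
                   + ((t - tt k) / (tt (Suc k) - tt k)) *\<^sub>R A (Suc k)"
  shows "pos_def_mfun (\<lambda>s t. f s t *\<^sub>R (transpose (B s) ** B t))"
  using f_pd B_pd pos_def_mat_mult_nonzero by (blast intro: pos_def_mfun_scaled_gram)

end
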